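(* Let $\alpha>1/2$, $c_0>0$, $\delta_n=n^{-\alpha/(2\alpha+1)}$, suppose $p\le Cn\delta_n^2$ for some $C>0$, let $\theta_{*,p}\in\mathbb R^p$ with $\|\theta_{*,p}\|_\alpha\le c_0$, let $\Pi=N(0,n^{-1/(2\alpha+1)}\Sigma_\alpha^{-1})$ on $\mathbb R^p$ and $\mathcal B_{n,r}=\{\theta\in\mathbb R^p:\|\theta-\theta_{*,p}\|\le\delta_n,\|\theta\|_\alpha\le r\}$. Then for any sufficiently large $r\ge\max(4,2c_0)$ there is a constant $c\equiv c(C,\alpha,c_0,r)>0$ such that $\Pi(\mathcal B_{n,r})\ge e^{-cn\delta_n^2}$.
   Context: $\|\cdot\|$ is the Euclidean norm on $\mathbb R^p$, $\|\theta\|_\alpha^2=\sum_{k=1}^pk^{2\alpha}\theta_k^2$, $\Sigma_\alpha=\mathrm{diag}(1,2^{2\alpha},\dots,p^{2\alpha})$. *)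

theory Defs
  imports "HOL-Probability.Probability"
begin

text \<open>Vectors in R^p are represented as functions nat => real, with coordinates indexed by 1..p.\<close>

definition rate :: "real \<Rightarrow> nat \<Rightarrow> real" where
  "rate \<alpha> n = real n powr (- \<alpha> / (2 * \<alpha> + 1))"

definition enorm_p :: "nat \<Rightarrow> (nat \<Rightarrow> real) \<Rightarrow> real" where
  "enorm_p p \<theta> = sqrt (\<Sum>k=1..p. (\<theta> k)\<^sup>2)"

definition anorm_p :: "real \<Rightarrow> nat \<Rightarrow> (nat \<Rightarrow> real) \<Rightarrow> real" where
  "anorm_p \<alpha> p \<theta> = sqrt (\<Sum>k=1..p. real k powr (2 * \<alpha>) * (\<theta> k)\<^sup>2)"

text \<open>The Gaussian prior N(0, n^(-1/(2 alpha+1)) Sigma_alpha^(-1)) on R^p: the covariance is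
  diagonal with variance n^(-1/(2 alpha+1)) k^(-2 alpha) in coordinate k, so the measure is
  the product of the corresponding one-dimensional normal laws (normal_density takes the
  standard deviation).\<close>
definition prior :: "real \<Rightarrow> nat \<Rightarrow> nat \<Rightarrow> (nat \<Rightarrow> real) measure" where
  "prior \<alpha> n p = PiM {1..p} (\<lambda>k. density lborel
      (normal_density 0 (sqrt (real n powr (- 1 / (2 * \<alpha> + 1)) * real k powr (- 2 * \<alpha>)))))"

definition ballB :: "real \<Rightarrow> nat \<Rightarrow> nat \<Rightarrow> (nat \<Rightarrow> real) \<Rightarrow> real \<Rightarrow> (nat \<Rightarrow> real) set" where
  "ballB \<alpha> n p \<theta>s r = {\<theta> \<in> space (prior \<alpha> n p).
      enorm_p p (\<lambda>k. \<theta> k - \<theta>s k) \<le> rate \<alpha> n \<and> anorm_p \<alpha> p \<theta> \<le> r}"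

end

theory Submission
  imports Defs
begin

(*
  The ball B_{n,r} contains the coordinate box of half-width eps = delta_n / sqrt p around
  theta_*: the box has Euclidean radius sqrt p * eps = delta_n, and on it
  |theta|_alpha^2 <= 2 |theta_*|_alpha^2 + 2 p^(2 alpha + 1) eps^2 <= 2 c_0^2 + 2 C^(2 alpha),
  which dictates r_0.  With m = n delta_n^2 = n^(1/(2 alpha + 1)) the prior is the product of the
  centred normal laws with standard deviations sigma_k = 1 / (sqrt m k^alpha), so the box has
  prior mass at least  prod_k 2 eps / (sqrt (2 pi) sigma_k) * exp (- (theta_{*,k}^2 + eps^2) / sigma_k^2).
  The exponent is at most m (c_0^2 + C^(2 alpha)); in the prefactor, log p! >= p log p - p and
  p log (p / m) >= p - m reduce everything to exp (- O(m)), using alpha >= 1/2.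
*)

lemma square_le_of_dist_le:
  fixes x a \<epsilon> :: real
  assumes "\<bar>x - a\<bar> \<le> \<epsilon>"
  shows "x\<^sup>2 \<le> 2 * (a\<^sup>2 + \<epsilon>\<^sup>2)"
proof -
  have "x\<^sup>2 \<le> (\<bar>a\<bar> + \<epsilon>)\<^sup>2"
    using assms by (intro abs_le_square_iff[THEN iffD1]) auto
  also have "\<dots> \<le> 2 * (a\<^sup>2 + \<epsilon>\<^sup>2)"
    using sum_squares_bound[of "\<bar>a\<bar>" \<epsilon>] by (simp add: power2_eq_square algebra_simps)
  finally show ?thesis .
qed

lemma powr_power2: "((x::real) powr a)\<^sup>2 = x powr (2 * a)"
  unfolding power2_eq_square by (simp flip: powr_add)

lemma sum_powr_le:
  fixes a :: real
  assumes "a \<ge> 0"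
  shows "(\<Sum>k=1..p. real k powr a) \<le> real p powr (a + 1)"
proof -
  have "(\<Sum>k=1..p. real k powr a) \<le> (\<Sum>k=1..p. real p powr a)"
    using assms by (intro sum_mono powr_mono2) auto
  also have "\<dots> = real p powr (a + 1)"
    by (simp add: powr_add)
  finally show ?thesis .
qed

lemma power_div_fact_le_exp:
  fixes x :: real
  assumes "x \<ge> 0"
  shows "x ^ n / fact n \<le> exp x"
proof -
  have series: "(\<lambda>k. x ^ k / fact k) sums exp x"
    using exp_converges[of x] by (simp add: divide_inverse_commute)
  have "(\<Sum>k\<in>{n}. x ^ k / fact k) \<le> (\<Sum>k. x ^ k / fact k)"
    using assms series by (intro sum_le_suminf) (auto simp: sums_iff)
  then show ?thesis
    using series by (simp add: sums_iff)
qed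

lemma ln_fact_ge: "real n * ln (real n) - real n \<le> ln (fact n)"
proof (cases "n = 0")
  case False
  have "real n ^ n / fact n \<le> exp (real n)"
    by (rule power_div_fact_le_exp) simp
  then have "ln (real n ^ n / fact n) \<le> ln (exp (real n))"
    using False by (intro ln_mono) auto
  then show ?thesis
    using False by (simp add: ln_div ln_realpow)
qed simp

lemma diff_le_mult_ln_ratio:
  fixes x y :: real
  assumes "x > 0" and "y > 0"
  shows "x - y \<le> x * (ln x - ln y)"
proof -
  have "ln (y / x) \<le> y / x - 1"
    using assms by (intro ln_le_minus_one) simp
  then have "x * ln (y / x) \<le> x * (y / x - 1)"
    using assms(1) by (intro mult_left_mono) auto
  then show ?thesis
    using assms by (simp add: ln_div algebra_simps)
qed

lemma ln_two_div_sqrt_two_pi_ge: "- 1 \<le> ln (2 / sqrt (2 * pi))"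
proof -
  have "sqrt (2 * pi) \<le> sqrt 16"
    using pi_less_4 by (intro real_sqrt_le_mono) simp
  then have "1 / 2 \<le> 2 / sqrt (2 * pi)"
    by (simp add: field_simps)
  moreover have "exp (- 1) \<le> (1 / 2 :: real)"
    using exp_ge_add_one_self[of 1] by (simp add: exp_minus field_simps)
  ultimately have "exp (- 1) \<le> 2 / sqrt (2 * pi)"
    by linarith
  then show ?thesis
    by (simp add: ln_ge_iff)
qed

lemma normal_density_ge_on_interval:
  fixes \<sigma> a \<epsilon> x :: real
  assumes "\<sigma> > 0" and "\<bar>x - a\<bar> \<le> \<epsilon>"
  shows "exp (- (a\<^sup>2 + \<epsilon>\<^sup>2) / \<sigma>\<^sup>2) / (sqrt (2 * pi) * \<sigma>) \<le> normal_density 0 \<sigma> x"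
proof -
  have "x\<^sup>2 \<le> 2 * (a\<^sup>2 + \<epsilon>\<^sup>2)"
    using assms(2) by (rule square_le_of_dist_le)
  then have "x\<^sup>2 / 2 / \<sigma>\<^sup>2 \<le> (a\<^sup>2 + \<epsilon>\<^sup>2) / \<sigma>\<^sup>2"
    by (intro divide_right_mono) auto
  then have "exp (- (a\<^sup>2 + \<epsilon>\<^sup>2) / \<sigma>\<^sup>2) \<le> exp (- x\<^sup>2 / (2 * \<sigma>\<^sup>2))"
    unfolding exp_le_cancel_iff minus_divide_left[symmetric] by simp
  then show ?thesis
    using assms(1) by (simp add: normal_density_def real_sqrt_mult divide_right_mono)
qed

lemma emeasure_normal_interval_ge:
  fixes \<sigma> a \<epsilon> :: real
  assumes "\<sigma> > 0" and "\<epsilon> \<ge> 0"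
  shows "ennreal (2 * \<epsilon> / (sqrt (2 * pi) * \<sigma>) * exp (- (a\<^sup>2 + \<epsilon>\<^sup>2) / \<sigma>\<^sup>2))
    \<le> emeasure (density lborel (normal_density 0 \<sigma>)) {a - \<epsilon> .. a + \<epsilon>}"
proof -
  define h where "h = exp (- (a\<^sup>2 + \<epsilon>\<^sup>2) / \<sigma>\<^sup>2) / (sqrt (2 * pi) * \<sigma>)"
  have "h \<ge> 0" using assms(1) by (simp add: h_def)
  then have "ennreal (2 * \<epsilon> * h) = ennreal h * emeasure lborel {a - \<epsilon> .. a + \<epsilon>}"
    using assms(2) by (simp add: ennreal_mult mult.commute)
  also have "\<dots> = (\<integral>\<^sup>+ x. ennreal h * indicator {a - \<epsilon> .. a + \<epsilon>} x \<partial>lborel)"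
    by (simp add: nn_integral_cmult_indicator)
  also have "\<dots> \<le> (\<integral>\<^sup>+ x. ennreal (normal_density 0 \<sigma> x) * indicator {a - \<epsilon> .. a + \<epsilon>} x \<partial>lborel)"
    using normal_density_ge_on_interval[OF assms(1)]
    by (intro nn_integral_mono) (auto simp: h_def indicator_def abs_le_iff)
  finally show ?thesis
    by (simp add: emeasure_density h_def mult.assoc)
qed

lemma measure_normal_box_ge:
  fixes \<sigma> a :: "'i \<Rightarrow> real" and \<epsilon> :: real
  assumes "finite I" and \<sigma>: "\<And>k. k \<in> I \<Longrightarrow> \<sigma> k > 0" and "\<epsilon> \<ge> 0"
  shows "(\<Prod>k\<in>I. 2 * \<epsilon> / (sqrt (2 * pi) * \<sigma> k)) * exp (- (\<Sum>k\<in>I. ((a k)\<^sup>2 + \<epsilon>\<^sup>2) / (\<sigma> k)\<^sup>2))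
    \<le> measure (PiM I (\<lambda>k. density lborel (normal_density 0 (\<sigma> k)))) (PiE I (\<lambda>k. {a k - \<epsilon> .. a k + \<epsilon>}))"
proof -
  define M where "M k = density lborel (normal_density 0 (\<sigma> k))" for k
  define box where "box k = {a k - \<epsilon> .. a k + \<epsilon>}" for k
  define L where "L k = 2 * \<epsilon> / (sqrt (2 * pi) * \<sigma> k) * exp (- ((a k)\<^sup>2 + \<epsilon>\<^sup>2) / (\<sigma> k)\<^sup>2)" for k
  have prob: "prob_space (M k)" if "k \<in> I" for k
    unfolding M_def using \<sigma>[OF that] by (rule prob_space_normal_density)
  interpret PiM: prob_space "PiM I M"
    using prob by (intro prob_space_PiM) auto
  have "(\<Prod>k\<in>I. 2 * \<epsilon> / (sqrt (2 * pi) * \<sigma> k)) * exp (- (\<Sum>k\<in>I. ((a k)\<^sup>2 + \<epsilon>\<^sup>2) / (\<sigma> k)\<^sup>2))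
      = (\<Prod>k\<in>I. L k)"
    unfolding L_def prod.distrib sum_negf[symmetric] exp_sum[OF \<open>finite I\<close>] minus_divide_left ..
  also have "ennreal (\<Prod>k\<in>I. L k) = (\<Prod>k\<in>I. ennreal (L k))"
    using \<sigma> \<open>\<epsilon> \<ge> 0\<close> by (intro prod_ennreal[symmetric]) (auto simp: L_def less_imp_le)
  also have "\<dots> \<le> (\<Prod>k\<in>I. emeasure (M k) (box k))"
    unfolding L_def M_def box_def
    using \<sigma> \<open>\<epsilon> \<ge> 0\<close> by (intro prod_mono_ennreal emeasure_normal_interval_ge) auto
  also have "\<dots> = emeasure (PiM I M) (prod_emb I M I (PiE I box))"
    using prob \<open>finite I\<close> by (intro emeasure_PiM_emb[symmetric]) (auto simp: box_def M_def)
  also have "\<dots> = ennreal (measure (PiM I M) (PiE I box))"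
    by (simp add: prod_emb_id box_def M_def PiM.emeasure_eq_measure)
  finally show ?thesis
    unfolding M_def box_def by (simp add: ennreal_le_iff)
qed

lemma gaussian_prefactor_ge:
  fixes \<alpha> m \<epsilon> :: real and p :: nat
  assumes "\<alpha> \<ge> 1/2" and "m > 0" and "p \<ge> 1" and \<epsilon>: "\<epsilon> = m powr (- \<alpha>) / sqrt p"
  shows "exp (- (1 + \<alpha>) * p - (\<alpha> - 1/2) * m) \<le> (2 * \<epsilon> * sqrt m / sqrt (2 * pi)) ^ p * fact p powr \<alpha>"
proof -
  define q where "q = 2 * \<epsilon> * sqrt m / sqrt (2 * pi)"
  have "q > 0"
    using assms by (simp add: q_def)
  have ln_q: "ln q = ln (2 / sqrt (2 * pi)) + (1/2 - \<alpha>) * ln m - ln p / 2"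
    using assms by (simp add: q_def \<epsilon> ln_mult ln_div ln_sqrt ln_powr algebra_simps)
  have ratio: "(\<alpha> - 1/2) * (p - m) \<le> (\<alpha> - 1/2) * (p * (ln p - ln m))"
    using diff_le_mult_ln_ratio[of p m] assms by (intro mult_left_mono) auto
  have "0 \<le> (\<alpha> - 1/2) * p"
    using assms(1) by simp
  then have "- (1 + \<alpha>) * p - (\<alpha> - 1/2) * m \<le> - (1 + \<alpha>) * p + (\<alpha> - 1/2) * (p * (ln p - ln m))"
    using ratio by (simp add: right_diff_distrib)
  also have "\<dots> \<le> p * ln q + \<alpha> * ln (fact p)"
  proof -
    have "- real p \<le> p * ln (2 / sqrt (2 * pi))"
      using ln_two_div_sqrt_two_pi_ge mult_left_mono[of "-1" _ "real p"] by simp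
    moreover have "\<alpha> * (p * ln p - p) \<le> \<alpha> * ln (fact p)"
      using ln_fact_ge[of p] assms(1) by (intro mult_left_mono) auto
    ultimately show ?thesis
      unfolding ln_q by (simp add: algebra_simps)
  qed
  also have "\<dots> = ln (q ^ p * fact p powr \<alpha>)"
    using \<open>q > 0\<close> by (simp add: ln_mult ln_realpow ln_powr)
  finally show ?thesis
    using \<open>q > 0\<close> by (simp add: q_def ln_ge_iff)
qed

lemma enorm_p_le:
  assumes "\<epsilon> \<ge> 0" and "\<And>k. k \<in> {1..p} \<Longrightarrow> \<bar>x k\<bar> \<le> \<epsilon>"
  shows "enorm_p p x \<le> sqrt p * \<epsilon>"
proof -
  have "(\<Sum>k=1..p. (x k)\<^sup>2) \<le> (\<Sum>k=1..p. \<epsilon>\<^sup>2)"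
    using assms by (intro sum_mono) (metis abs_le_square_iff abs_of_nonneg)
  then have "enorm_p p x \<le> sqrt (p * \<epsilon>\<^sup>2)"
    unfolding enorm_p_def by (simp add: real_sqrt_le_mono)
  then show ?thesis
    using assms(1) by (simp add: real_sqrt_mult)
qed

lemma anorm_p_nonneg: "anorm_p \<alpha> p \<theta> \<ge> 0"
  by (simp add: anorm_p_def sum_nonneg)

lemma anorm_p_sq: "(anorm_p \<alpha> p \<theta>)\<^sup>2 = (\<Sum>k=1..p. real k powr (2 * \<alpha>) * (\<theta> k)\<^sup>2)"
  by (simp add: anorm_p_def sum_nonneg)

lemma anorm_p_sq_le:
  assumes "\<alpha> \<ge> 0" and "\<And>k. k \<in> {1..p} \<Longrightarrow> \<bar>\<theta> k - \<theta>' k\<bar> \<le> \<epsilon>"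
  shows "(anorm_p \<alpha> p \<theta>)\<^sup>2 \<le> 2 * (anorm_p \<alpha> p \<theta>')\<^sup>2 + 2 * real p powr (2 * \<alpha> + 1) * \<epsilon>\<^sup>2"
proof -
  have "real k powr (2 * \<alpha>) * (\<theta> k)\<^sup>2 \<le> real k powr (2 * \<alpha>) * (2 * ((\<theta>' k)\<^sup>2 + \<epsilon>\<^sup>2))"
    if "k \<in> {1..p}" for k
    using square_le_of_dist_le[OF assms(2)[OF that]] by (intro mult_left_mono) auto
  then have "(\<Sum>k=1..p. real k powr (2 * \<alpha>) * (\<theta> k)\<^sup>2)
      \<le> (\<Sum>k=1..p. 2 * (real k powr (2 * \<alpha>) * (\<theta>' k)\<^sup>2) + 2 * \<epsilon>\<^sup>2 * real k powr (2 * \<alpha>))"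
    by (intro sum_mono) (simp add: algebra_simps)
  also have "\<dots> \<le> 2 * (\<Sum>k=1..p. real k powr (2 * \<alpha>) * (\<theta>' k)\<^sup>2) + 2 * \<epsilon>\<^sup>2 * real p powr (2 * \<alpha> + 1)"
    using sum_powr_le[of "2 * \<alpha>" p] assms(1)
    by (simp add: sum.distrib sum_distrib_left[symmetric] mult_left_mono)
  finally show ?thesis
    by (simp add: anorm_p_sq algebra_simps)
qed

definition effective_dim :: "real \<Rightarrow> nat \<Rightarrow> real" where
  "effective_dim \<alpha> n = real n powr (1 / (2 * \<alpha> + 1))"

definition prior_sd :: "real \<Rightarrow> nat \<Rightarrow> nat \<Rightarrow> real" where
  "prior_sd \<alpha> n k = sqrt (real n powr (- 1 / (2 * \<alpha> + 1)) * real k powr (- 2 * \<alpha>))"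

lemma prior_eq_PiM_prior_sd:
  "prior \<alpha> n p = PiM {1..p} (\<lambda>k. density lborel (normal_density 0 (prior_sd \<alpha> n k)))"
  unfolding prior_def prior_sd_def ..

lemma space_prior: "space (prior \<alpha> n p) = PiE {1..p} (\<lambda>_. UNIV)"
  by (simp add: prior_def space_PiM)

lemma sets_ballB: "ballB \<alpha> n p \<theta>s r \<in> sets (prior \<alpha> n p)"
  unfolding ballB_def enorm_p_def anorm_p_def prior_def by measurable

lemma n_mult_rate_sq:
  assumes "\<alpha> > - 1/2"
  shows "real n * (rate \<alpha> n)\<^sup>2 = effective_dim \<alpha> n"
proof (cases "n = 0")
  case False
  have "(rate \<alpha> n)\<^sup>2 = real n powr (2 * (- \<alpha> / (2 * \<alpha> + 1)))"
    unfolding rate_def power2_eq_square mult_2 powr_add ..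
  then have "real n * (rate \<alpha> n)\<^sup>2 = real n powr (1 + 2 * (- \<alpha> / (2 * \<alpha> + 1)))"
    unfolding powr_add using False by simp
  also have "1 + 2 * (- \<alpha> / (2 * \<alpha> + 1)) = 1 / (2 * \<alpha> + 1)"
    using assms by (simp add: field_simps)
  finally show ?thesis
    by (simp add: effective_dim_def)
qed (simp add: rate_def effective_dim_def)

lemma rate_eq_effective_dim_powr: "rate \<alpha> n = effective_dim \<alpha> n powr (- \<alpha>)"
  by (simp add: rate_def effective_dim_def powr_powr)

lemma inverse_prior_sd:
  assumes "n \<ge> 1" and "k \<ge> 1"
  shows "1 / prior_sd \<alpha> n k = sqrt (effective_dim \<alpha> n) * real k powr \<alpha>"
proof -
  have "real n powr (- 1 / (2 * \<alpha> + 1)) = 1 / (sqrt (effective_dim \<alpha> n))\<^sup>2"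
    using assms by (simp add: effective_dim_def powr_minus_divide minus_divide_left[symmetric])
  moreover have "real k powr (- 2 * \<alpha>) = 1 / (real k powr \<alpha>)\<^sup>2"
    by (simp add: powr_power2 powr_minus_divide)
  ultimately have "prior_sd \<alpha> n k = sqrt ((1 / (sqrt (effective_dim \<alpha> n) * real k powr \<alpha>))\<^sup>2)"
    unfolding prior_sd_def by (simp add: power_mult_distrib power_divide)
  then show ?thesis
    using assms by (simp add: effective_dim_def)
qed

lemma prior_sd_pos:
  assumes "n \<ge> 1" and "k \<ge> 1"
  shows "prior_sd \<alpha> n k > 0"
proof -
  have "1 / prior_sd \<alpha> n k > 0"
    using assms by (simp add: inverse_prior_sd effective_dim_def)
  then show ?thesis
    by simp
qed

lemma inverse_prior_sd_sq:
  assumes "n \<ge> 1" and "k \<ge> 1"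
  shows "1 / (prior_sd \<alpha> n k)\<^sup>2 = effective_dim \<alpha> n * real k powr (2 * \<alpha>)"
proof -
  have "1 / (prior_sd \<alpha> n k)\<^sup>2 = (sqrt (effective_dim \<alpha> n) * real k powr \<alpha>)\<^sup>2"
    using inverse_prior_sd[OF assms] by (simp add: power_one_over[symmetric])
  then show ?thesis
    using assms(1) by (simp add: power_mult_distrib powr_power2 effective_dim_def)
qed

lemma prob_space_prior:
  assumes "n \<ge> 1"
  shows "prob_space (prior \<alpha> n p)"
  unfolding prior_eq_PiM_prior_sd
  using assms by (intro prob_space_PiM prob_space_normal_density prior_sd_pos) auto

lemma prod_prior_sd_eq:
  assumes "n \<ge> 1"
  shows "(\<Prod>k\<in>{1..p}. 2 * \<epsilon> / (sqrt (2 * pi) * prior_sd \<alpha> n k))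
    = (2 * \<epsilon> * sqrt (effective_dim \<alpha> n) / sqrt (2 * pi)) ^ p * fact p powr \<alpha>"
proof -
  have "(\<Prod>k\<in>{1..p}. 2 * \<epsilon> / (sqrt (2 * pi) * prior_sd \<alpha> n k))
      = (\<Prod>k\<in>{1..p}. 2 * \<epsilon> * sqrt (effective_dim \<alpha> n) / sqrt (2 * pi) * real k powr \<alpha>)"
  proof (intro prod.cong refl)
    fix k assume "k \<in> {1..p}"
    have "2 * \<epsilon> / (sqrt (2 * pi) * prior_sd \<alpha> n k) = 2 * \<epsilon> / sqrt (2 * pi) * (1 / prior_sd \<alpha> n k)"
      by simp
    also have "\<dots> = 2 * \<epsilon> * sqrt (effective_dim \<alpha> n) / sqrt (2 * pi) * real k powr \<alpha>"
      using \<open>k \<in> {1..p}\<close> by (simp add: inverse_prior_sd[OF assms])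
    finally show "2 * \<epsilon> / (sqrt (2 * pi) * prior_sd \<alpha> n k)
        = 2 * \<epsilon> * sqrt (effective_dim \<alpha> n) / sqrt (2 * pi) * real k powr \<alpha>" .
  qed
  then show ?thesis
    unfolding prod.distrib by (simp add: fact_prod prod_powr_distrib)
qed

lemma sum_prior_sd_eq:
  assumes "n \<ge> 1"
  shows "(\<Sum>k\<in>{1..p}. ((a k)\<^sup>2 + \<epsilon>\<^sup>2) / (prior_sd \<alpha> n k)\<^sup>2)
    = effective_dim \<alpha> n * ((anorm_p \<alpha> p a)\<^sup>2 + \<epsilon>\<^sup>2 * (\<Sum>k=1..p. real k powr (2 * \<alpha>)))"
proof -
  have "(\<Sum>k\<in>{1..p}. ((a k)\<^sup>2 + \<epsilon>\<^sup>2) / (prior_sd \<alpha> n k)\<^sup>2)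
      = (\<Sum>k=1..p. ((a k)\<^sup>2 + \<epsilon>\<^sup>2) * (effective_dim \<alpha> n * real k powr (2 * \<alpha>)))"
  proof (intro sum.cong refl)
    fix k assume "k \<in> {1..p}"
    have "((a k)\<^sup>2 + \<epsilon>\<^sup>2) / (prior_sd \<alpha> n k)\<^sup>2 = ((a k)\<^sup>2 + \<epsilon>\<^sup>2) * (1 / (prior_sd \<alpha> n k)\<^sup>2)"
      by simp
    also have "\<dots> = ((a k)\<^sup>2 + \<epsilon>\<^sup>2) * (effective_dim \<alpha> n * real k powr (2 * \<alpha>))"
      using \<open>k \<in> {1..p}\<close> by (simp add: inverse_prior_sd_sq[OF assms])
    finally show "((a k)\<^sup>2 + \<epsilon>\<^sup>2) / (prior_sd \<alpha> n k)\<^sup>2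
        = ((a k)\<^sup>2 + \<epsilon>\<^sup>2) * (effective_dim \<alpha> n * real k powr (2 * \<alpha>))" .
  qed
  then show ?thesis
    by (simp add: anorm_p_sq sum.distrib sum_distrib_left sum_distrib_right algebra_simps)
qed

lemma box_width_term_le:
  fixes \<alpha> m C \<epsilon> :: real and p :: nat
  assumes "\<alpha> \<ge> 0" and "m > 0" and "p \<ge> 1" and "real p \<le> C * m"
    and \<epsilon>: "\<epsilon> = m powr (- \<alpha>) / sqrt p"
  shows "real p powr (2 * \<alpha> + 1) * \<epsilon>\<^sup>2 \<le> C powr (2 * \<alpha>)"
proof -
  have "(m powr (- \<alpha>))\<^sup>2 = 1 / m powr (2 * \<alpha>)"
    unfolding powr_power2 by (simp add: powr_minus_divide)
  then have "real p powr (2 * \<alpha> + 1) * \<epsilon>\<^sup>2 = real p powr (2 * \<alpha>) / m powr (2 * \<alpha>)"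
    using assms(3) unfolding \<epsilon> powr_add by (simp add: power_divide)
  also have "\<dots> = (real p / m) powr (2 * \<alpha>)"
    using assms(2) by (simp add: powr_divide)
  also have "\<dots> \<le> C powr (2 * \<alpha>)"
    using assms by (intro powr_mono2) (auto simp: field_simps)
  finally show ?thesis .
qed

lemma box_subset_ballB:
  fixes \<alpha> C c\<^sub>0 r :: real and n p :: nat and \<theta>s :: "nat \<Rightarrow> real"
  defines "\<epsilon> \<equiv> rate \<alpha> n / sqrt p"
  assumes "\<alpha> \<ge> 0" and "n \<ge> 1" and "p \<ge> 1" and "real p \<le> C * effective_dim \<alpha> n"
    and "anorm_p \<alpha> p \<theta>s \<le> c\<^sub>0" and "sqrt (2 * c\<^sub>0\<^sup>2 + 2 * C powr (2 * \<alpha>)) \<le> r"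
  shows "PiE {1..p} (\<lambda>k. {\<theta>s k - \<epsilon> .. \<theta>s k + \<epsilon>}) \<subseteq> ballB \<alpha> n p \<theta>s r"
proof
  fix \<theta> assume \<theta>: "\<theta> \<in> PiE {1..p} (\<lambda>k. {\<theta>s k - \<epsilon> .. \<theta>s k + \<epsilon>})"
  have near: "\<bar>\<theta> k - \<theta>s k\<bar> \<le> \<epsilon>" if "k \<in> {1..p}" for k
  proof -
    have "\<theta> k \<in> {\<theta>s k - \<epsilon> .. \<theta>s k + \<epsilon>}"
      using \<theta> that by (auto simp: PiE_iff)
    then show ?thesis
      by (auto simp: abs_le_iff)
  qed
  have "\<epsilon> \<ge> 0"
    by (simp add: \<epsilon>_def rate_def)
  have "enorm_p p (\<lambda>k. \<theta> k - \<theta>s k) \<le> sqrt p * \<epsilon>"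
    using \<open>\<epsilon> \<ge> 0\<close> near by (rule enorm_p_le)
  also have "sqrt p * \<epsilon> = rate \<alpha> n"
    using assms(4) by (simp add: \<epsilon>_def)
  finally have "enorm_p p (\<lambda>k. \<theta> k - \<theta>s k) \<le> rate \<alpha> n" .
  moreover have "anorm_p \<alpha> p \<theta> \<le> r"
  proof -
    have "(anorm_p \<alpha> p \<theta>s)\<^sup>2 \<le> c\<^sub>0\<^sup>2"
      using assms(6) by (intro power_mono anorm_p_nonneg)
    moreover have "real p powr (2 * \<alpha> + 1) * \<epsilon>\<^sup>2 \<le> C powr (2 * \<alpha>)"
      using assms(2-5) by (intro box_width_term_le[where m = "effective_dim \<alpha> n"])
        (auto simp: \<epsilon>_def effective_dim_def rate_eq_effective_dim_powr)
    moreover have "(anorm_p \<alpha> p \<theta>)\<^sup>2 \<le> 2 * (anorm_p \<alpha> p \<theta>s)\<^sup>2 + 2 * real p powr (2 * \<alpha> + 1) * \<epsilon>\<^sup>2"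
      using assms(2) near by (intro anorm_p_sq_le) auto
    ultimately have "anorm_p \<alpha> p \<theta> \<le> sqrt (2 * c\<^sub>0\<^sup>2 + 2 * C powr (2 * \<alpha>))"
      by (intro real_le_rsqrt) linarith
    then show ?thesis
      using assms(7) by linarith
  qed
  moreover have "\<theta> \<in> space (prior \<alpha> n p)"
    using \<theta> by (auto simp: space_prior PiE_iff)
  ultimately show "\<theta> \<in> ballB \<alpha> n p \<theta>s r"
    by (simp add: ballB_def)
qed

lemma measure_prior_box_ge:
  fixes \<alpha> C c\<^sub>0 :: real and n p :: nat and \<theta>s :: "nat \<Rightarrow> real"
  defines "m \<equiv> effective_dim \<alpha> n" and "\<epsilon> \<equiv> rate \<alpha> n / sqrt p"
  assumes "\<alpha> \<ge> 1/2" and "n \<ge> 1" and "p \<ge> 1" and "real p \<le> C * m" and "anorm_p \<alpha> p \<theta>s \<le> c\<^sub>0"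
  shows "exp (- ((1 + \<alpha>) * C + \<alpha> + c\<^sub>0\<^sup>2 + C powr (2 * \<alpha>)) * m)
    \<le> measure (prior \<alpha> n p) (PiE {1..p} (\<lambda>k. {\<theta>s k - \<epsilon> .. \<theta>s k + \<epsilon>}))"
proof -
  define \<sigma> where "\<sigma> = prior_sd \<alpha> n"
  have "m > 0"
    using assms(4) by (simp add: m_def effective_dim_def)
  have \<epsilon>_eq: "\<epsilon> = m powr (- \<alpha>) / sqrt p"
    by (simp add: \<epsilon>_def m_def rate_eq_effective_dim_powr)
  have prefactor: "exp (- (1 + \<alpha>) * p - (\<alpha> - 1/2) * m) \<le> (\<Prod>k\<in>{1..p}. 2 * \<epsilon> / (sqrt (2 * pi) * \<sigma> k))"
    using gaussian_prefactor_ge[OF assms(3) \<open>m > 0\<close> assms(5) \<epsilon>_eq]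
    unfolding \<sigma>_def m_def prod_prior_sd_eq[OF assms(4)] .
  have exponent: "(\<Sum>k\<in>{1..p}. ((\<theta>s k)\<^sup>2 + \<epsilon>\<^sup>2) / (\<sigma> k)\<^sup>2) \<le> m * (c\<^sub>0\<^sup>2 + C powr (2 * \<alpha>))"
  proof -
    have "\<epsilon>\<^sup>2 * (\<Sum>k=1..p. real k powr (2 * \<alpha>)) \<le> real p powr (2 * \<alpha> + 1) * \<epsilon>\<^sup>2"
      using sum_powr_le[of "2 * \<alpha>" p] assms(3) by (simp add: mult.commute mult_left_mono)
    also have "\<dots> \<le> C powr (2 * \<alpha>)"
      using assms(3,5,6) \<open>m > 0\<close> \<epsilon>_eq by (intro box_width_term_le) auto
    moreover have "(anorm_p \<alpha> p \<theta>s)\<^sup>2 \<le> c\<^sub>0\<^sup>2"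
      using assms(7) by (intro power_mono anorm_p_nonneg)
    ultimately show ?thesis
      using \<open>m > 0\<close> unfolding \<sigma>_def m_def sum_prior_sd_eq[OF assms(4)]
      by (intro mult_left_mono) auto
  qed
  have "(1 + \<alpha>) * p \<le> (1 + \<alpha>) * (C * m)"
    using assms(3,6) by (intro mult_left_mono) auto
  then have "exp (- ((1 + \<alpha>) * C + \<alpha> + c\<^sub>0\<^sup>2 + C powr (2 * \<alpha>)) * m)
      \<le> exp (- (1 + \<alpha>) * p - (\<alpha> - 1/2) * m) * exp (- (\<Sum>k\<in>{1..p}. ((\<theta>s k)\<^sup>2 + \<epsilon>\<^sup>2) / (\<sigma> k)\<^sup>2))"
    using exponent \<open>m > 0\<close> unfolding exp_add[symmetric] exp_le_cancel_iff
    by (simp add: algebra_simps)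
  also have "\<dots> \<le> (\<Prod>k\<in>{1..p}. 2 * \<epsilon> / (sqrt (2 * pi) * \<sigma> k))
      * exp (- (\<Sum>k\<in>{1..p}. ((\<theta>s k)\<^sup>2 + \<epsilon>\<^sup>2) / (\<sigma> k)\<^sup>2))"
    using prefactor by (rule mult_right_mono) simp
  also have "\<dots> \<le> measure (prior \<alpha> n p) (PiE {1..p} (\<lambda>k. {\<theta>s k - \<epsilon> .. \<theta>s k + \<epsilon>}))"
    unfolding prior_eq_PiM_prior_sd \<sigma>_def
    using assms(4) by (intro measure_normal_box_ge prior_sd_pos) (auto simp: \<epsilon>_def rate_def)
  finally show ?thesis .
qed

theorem lemma6p11:
  fixes \<alpha> c\<^sub>0 C :: real
  assumes "\<alpha> > 1/2" and "c\<^sub>0 > 0" and "C > 0"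
  shows "\<exists>r\<^sub>0 \<ge> max 4 (2 * c\<^sub>0). \<forall>r \<ge> r\<^sub>0. \<exists>c > 0.
           \<forall>(n::nat) (p::nat) (\<theta>s :: nat \<Rightarrow> real).
             n \<ge> 1 \<longrightarrow> p \<ge> 1 \<longrightarrow> real p \<le> C * real n * (rate \<alpha> n)\<^sup>2 \<longrightarrow>
             anorm_p \<alpha> p \<theta>s \<le> c\<^sub>0 \<longrightarrow>
             measure (prior \<alpha> n p) (ballB \<alpha> n p \<theta>s r) \<ge> exp (- c * real n * (rate \<alpha> n)\<^sup>2)"
proof -
  define r\<^sub>0 where "r\<^sub>0 = max (max 4 (2 * c\<^sub>0)) (sqrt (2 * c\<^sub>0\<^sup>2 + 2 * C powr (2 * \<alpha>)))"
  define c where "c = (1 + \<alpha>) * C + \<alpha> + c\<^sub>0\<^sup>2 + C powr (2 * \<alpha>)"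
  show ?thesis
  proof (rule exI[of _ r\<^sub>0], intro conjI allI impI exI[of _ c])
    show "max 4 (2 * c\<^sub>0) \<le> r\<^sub>0"
      by (simp add: r\<^sub>0_def)
    show "c > 0"
      using assms by (simp add: c_def add_pos_nonneg)
    fix r n p \<theta>s
    assume "r\<^sub>0 \<le> r" and hyps: "n \<ge> 1" "p \<ge> 1" "real p \<le> C * real n * (rate \<alpha> n)\<^sup>2"
      "anorm_p \<alpha> p \<theta>s \<le> c\<^sub>0"
    interpret prior: prob_space "prior \<alpha> n p"
      using hyps(1) by (rule prob_space_prior)
    have m: "real n * (rate \<alpha> n)\<^sup>2 = effective_dim \<alpha> n"
      using assms(1) by (intro n_mult_rate_sq) simp
    have "exp (- c * real n * (rate \<alpha> n)\<^sup>2)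
        \<le> measure (prior \<alpha> n p) (PiE {1..p} (\<lambda>k. {\<theta>s k - rate \<alpha> n / sqrt p .. \<theta>s k + rate \<alpha> n / sqrt p}))"
      using measure_prior_box_ge[of \<alpha> n p C \<theta>s c\<^sub>0] assms(1) m hyps
      by (simp add: c_def mult.assoc)
    also have "\<dots> \<le> measure (prior \<alpha> n p) (ballB \<alpha> n p \<theta>s r)"
      using box_subset_ballB[of \<alpha> n p C \<theta>s c\<^sub>0 r] assms(1) m hyps \<open>r\<^sub>0 \<le> r\<close>
      by (intro prior.finite_measure_mono sets_ballB) (simp_all add: r\<^sub>0_def mult.assoc)
    finally show "exp (- c * real n * (rate \<alpha> n)\<^sup>2) \<le> measure (prior \<alpha> n p) (ballB \<alpha> n p \<theta>s r)" .
  qed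
qed

end
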